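(* Let $\Sigma=\{c_1\prec c_2\prec\dots\prec c_\sigma\}$, let $n\ge1$ and nonnegative integers $n_c$ ($c\in\Sigma$) with $\sum_c n_c=n-1$ be given, and let $\mathcal U$, $\mathcal M$, $f$ be as in the context. A binary matrix $M\in\mathcal M$ belongs to $f(\mathcal U)$ if and only if its associated sequence $\mathcal L$ is a Łukasiewicz path.
   Context: A trie over a finite totally ordered alphabet $\Sigma$ of size $\sigma$ is a rooted ordered tree with edges labeled by symbols of $\Sigma$ such that edges leaving the same node have distinct labels and siblings are ordered by their incoming labels. For a node $u$, $out(u)\subseteq\Sigma$ is the set of labels of edges leaving $u$. $\mathcal U$ is the set of tries with $n$ nodes over $\Sigma$ in which exactly $n_c$ edges are labeled $c$, for each $c$. $\mathcal M$ is the set of all $\sigma\times n$ binary matrices $M$ such that, for every $i\in[\sigma]$, row $i$ of $M$ contains exactly $n_{c_i}$ ones. The map $f:\mathcal U\to\mathcal M$ sends a trie with nodes $u_1,\dots,u_n$ listed in pre-order (children visited in increasing label order) to the matrix $M$ with $M[i][j]=1$ iff $c_i\in out(u_j)$. For $M\in\mathcal M$, define integer sequences of length $n$ by $\mathcal D[i]=(\text{number of ones in column } i \text{ of } M)-1$ and $\mathcal L[i]=\sum_{j=1}^i\mathcal D[j]$. A Łukasiewicz path is an integer sequence $\mathcal L[1..n]$ with $\mathcal L[n]=-1$ and, for every $i\in[n-1]$, $\mathcal L[i]\ge 0$ and $\mathcal L[i+1]-\mathcal L[i]\ge -1$. *)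

theory Defs
  imports Main
begin

text \<open>Alphabet: \<Sigma> = {1..\<sigma>} with the natural order, c_i = i.
  A trie is a rooted ordered tree; each node stores the list of its outgoing
  edges (label, child subtree).\<close>

datatype trie = Node "(nat \<times> trie) list"

fun children :: "trie \<Rightarrow> (nat \<times> trie) list" where
  "children (Node cs) = cs"

fun wf_trie :: "nat \<Rightarrow> trie \<Rightarrow> bool" where
  "wf_trie \<sigma> (Node cs) =
     (sorted_wrt (<) (map fst cs) \<and> (\<forall>c \<in> set (map fst cs). 1 \<le> c \<and> c \<le> \<sigma>)
      \<and> (\<forall>p \<in> set cs. wf_trie \<sigma> (snd p)))"

text \<open>The sets out(u_1), ..., out(u_n) of the nodes listed in pre-order
  (children visited in increasing label order).\<close>
fun preorder_out :: "trie \<Rightarrow> nat set list" where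
  "preorder_out (Node cs) = set (map fst cs) # concat (map (\<lambda>p. preorder_out (snd p)) cs)"

fun edge_labels :: "trie \<Rightarrow> nat list" where
  "edge_labels (Node cs) = concat (map (\<lambda>p. fst p # edge_labels (snd p)) cs)"

definition num_nodes :: "trie \<Rightarrow> nat" where
  "num_nodes T = length (preorder_out T)"

definition tries_U :: "nat \<Rightarrow> nat \<Rightarrow> (nat \<Rightarrow> nat) \<Rightarrow> trie set" where
  "tries_U \<sigma> n ns = {T. wf_trie \<sigma> T \<and> num_nodes T = n \<and>
      (\<forall>c \<in> {1..\<sigma>}. count_list (edge_labels T) c = ns c)}"

text \<open>A \<sigma> x n binary matrix, rows 1..\<sigma>, columns 1..n, as a predicate
  that is False outside the index range.\<close>
definition mats_M :: "nat \<Rightarrow> nat \<Rightarrow> (nat \<Rightarrow> nat) \<Rightarrow> (nat \<Rightarrow> nat \<Rightarrow> bool) set" where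
  "mats_M \<sigma> n ns = {M. (\<forall>i j. M i j \<longrightarrow> i \<in> {1..\<sigma>} \<and> j \<in> {1..n}) \<and>
      (\<forall>i \<in> {1..\<sigma>}. card {j \<in> {1..n}. M i j} = ns i)}"

definition f_map :: "nat \<Rightarrow> trie \<Rightarrow> (nat \<Rightarrow> nat \<Rightarrow> bool)" where
  "f_map \<sigma> T = (\<lambda>i j. i \<in> {1..\<sigma>} \<and> j \<in> {1..num_nodes T} \<and> i \<in> preorder_out T ! (j - 1))"

definition seqD :: "nat \<Rightarrow> (nat \<Rightarrow> nat \<Rightarrow> bool) \<Rightarrow> nat \<Rightarrow> int" where
  "seqD \<sigma> M j = int (card {i \<in> {1..\<sigma>}. M i j}) - 1"

definition seqL :: "nat \<Rightarrow> (nat \<Rightarrow> nat \<Rightarrow> bool) \<Rightarrow> nat \<Rightarrow> int" where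
  "seqL \<sigma> M i = (\<Sum>j = 1..i. seqD \<sigma> M j)"

definition lukasiewicz_path :: "nat \<Rightarrow> (nat \<Rightarrow> int) \<Rightarrow> bool" where
  "lukasiewicz_path n L \<longleftrightarrow> L n = -1 \<and>
     (\<forall>i \<in> {1..n-1}. L i \<ge> 0 \<and> L (i + 1) - L i \<ge> -1)"

end

theory Submission
  imports Defs
begin

text \<open>Give a set \<open>S\<close> the weight \<open>|S| - 1\<close>. In the preorder list of out-sets of a
  trie every node opens \<open>|out(u)|\<close> subtrees and fills one slot, so the total weight is
  \<open>-1\<close> while every proper prefix has weight \<open>\<ge> 0\<close>; more generally a forest of \<open>k\<close> tries
  gives total weight \<open>-k\<close> with all proper prefixes above \<open>-k\<close>. Conversely such a list
  with \<open>k > 0\<close> splits where its running weight first reaches \<open>-1\<close>, so it factors into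
  \<open>k\<close> lists of the tree kind, and a list \<open>S # rest\<close> of the tree kind rebuilds a trie
  whose root has the labels of \<open>S\<close> and whose subtries are rebuilt from the \<open>|S|\<close>
  factors of \<open>rest\<close>. The columns of \<open>M\<close> are such a list of sets and \<open>L\<close> is its running
  weight, with the step condition of a Lukasiewicz path automatic.\<close>

definition excess :: "nat set list \<Rightarrow> int" where
  "excess xs = (\<Sum>S\<leftarrow>xs. int (card S) - 1)"

lemma excess_simps [simp]:
  "excess [] = 0"
  "excess (S # xs) = int (card S) - 1 + excess xs"
  "excess (xs @ ys) = excess xs + excess ys"
  by (simp_all add: excess_def)

definition lukasiewicz_word :: "nat \<Rightarrow> nat set list \<Rightarrow> bool" where
  "lukasiewicz_word k xs \<longleftrightarrow>
     excess xs = - int k \<and> (\<forall>i < length xs. excess (take i xs) > - int k)"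

lemma lukasiewicz_word_0: "lukasiewicz_word 0 xs \<longleftrightarrow> xs = []"
  by (cases xs) (auto simp: lukasiewicz_word_def)

lemma lukasiewicz_word_Cons:
  "lukasiewicz_word 1 (S # xs) \<longleftrightarrow> lukasiewicz_word (card S) xs"
  by (auto simp: lukasiewicz_word_def All_less_Suc2)

lemma lukasiewicz_word_append:
  assumes a: "lukasiewicz_word 1 a" and b: "lukasiewicz_word k b"
  shows "lukasiewicz_word (Suc k) (a @ b)"
  unfolding lukasiewicz_word_def
proof (intro conjI allI impI)
  show "excess (a @ b) = - int (Suc k)"
    using a b by (simp add: lukasiewicz_word_def)
  fix i assume i: "i < length (a @ b)"
  show "excess (take i (a @ b)) > - int (Suc k)"
  proof (cases "i < length a")
    case True
    then have "excess (take i a) > -1" using a by (simp add: lukasiewicz_word_def)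
    then show ?thesis using True by simp
  next
    case False
    then have "i - length a < length b" using i by simp
    then show ?thesis using False a b by (simp add: lukasiewicz_word_def)
  qed
qed

text \<open>The excess drops by at most one per step, so the first negative prefix has excess \<open>-1\<close>.\<close>
lemma lukasiewicz_word_SucE:
  assumes "lukasiewicz_word (Suc k) xs"
  obtains a b where "xs = a @ b" "lukasiewicz_word 1 a" "lukasiewicz_word k b"
proof -
  have word: "excess xs = - int (Suc k)" "\<And>i. i < length xs \<Longrightarrow> excess (take i xs) > - int (Suc k)"
    using assms by (auto simp: lukasiewicz_word_def)
  define m where "m = (LEAST m. excess (take m xs) < 0)"
  have neg: "excess (take m xs) < 0"
    unfolding m_def by (rule LeastI[of _ "length xs"]) (simp add: word)
  have m_le: "m \<le> length xs"
    unfolding m_def by (rule Least_le) (simp add: word)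
  have nonneg: "excess (take i xs) \<ge> 0" if "i < m" for i
    using not_less_Least[OF that[unfolded m_def]] by (simp add: m_def)
  obtain m' where m: "m = Suc m'"
    using neg by (cases m) auto
  have "take m xs = take m' xs @ [xs ! m']"
    using m m_le by (simp add: take_Suc_conv_app_nth)
  then have a_excess: "excess (take m xs) = -1"
    using neg nonneg[of m'] m by simp
  show thesis
  proof
    show "xs = take m xs @ drop m xs" by simp
    show "lukasiewicz_word 1 (take m xs)"
      unfolding lukasiewicz_word_def
    proof (intro conjI allI impI)
      fix i assume "i < length (take m xs)"
      then have "excess (take i xs) \<ge> 0" using nonneg by simp
      then show "excess (take i (take m xs)) > - int 1"
        using \<open>i < length (take m xs)\<close> by simp
    qed (simp add: a_excess)
    show "lukasiewicz_word k (drop m xs)"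
      unfolding lukasiewicz_word_def
    proof (intro conjI allI impI)
      show "excess (drop m xs) = - int k"
        using word(1) a_excess excess_simps(3)[of "take m xs" "drop m xs"] by simp
      fix j assume "j < length (drop m xs)"
      then have "excess (take (m + j) xs) > - int (Suc k)"
        using word(2) by simp
      moreover have "take (m + j) xs = take m xs @ take j (drop m xs)"
        by (rule take_add)
      ultimately show "excess (take j (drop m xs)) > - int k"
        using a_excess by simp
    qed
  qed
qed

lemma lukasiewicz_word_concat:
  "(\<And>ys. ys \<in> set xss \<Longrightarrow> lukasiewicz_word 1 ys) \<Longrightarrow> lukasiewicz_word (length xss) (concat xss)"
  by (induction xss) (simp_all add: lukasiewicz_word_0 lukasiewicz_word_append)

lemma lukasiewicz_word_factor:
  assumes "lukasiewicz_word k xs"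
  obtains xss where "length xss = k" "concat xss = xs" "\<And>ys. ys \<in> set xss \<Longrightarrow> lukasiewicz_word 1 ys"
  using assms
proof (induction k arbitrary: xs thesis)
  case 0
  then show ?case by (simp add: lukasiewicz_word_0)
next
  case (Suc k)
  from Suc.prems(2) obtain a b where ab: "xs = a @ b" "lukasiewicz_word 1 a" "lukasiewicz_word k b"
    by (rule lukasiewicz_word_SucE)
  from Suc.IH[OF _ ab(3)] obtain xss where
    "length xss = k" "concat xss = b" "\<And>ys. ys \<in> set xss \<Longrightarrow> lukasiewicz_word 1 ys"
    by blast
  with ab show ?case by (intro Suc.prems(1)[of "a # xss"]) auto
qed

lemma wf_trie_Node_distinct: "wf_trie \<sigma> (Node cs) \<Longrightarrow> distinct (map fst cs)"
  by (simp add: strict_sorted_iff)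

lemma preorder_out_lukasiewicz_word: "wf_trie \<sigma> t \<Longrightarrow> lukasiewicz_word 1 (preorder_out t)"
proof (induction t rule: preorder_out.induct)
  case (1 cs)
  have "card (set (map fst cs)) = length cs"
    using distinct_card[OF wf_trie_Node_distinct[OF "1.prems"]] by simp
  moreover have "lukasiewicz_word (length cs) (concat (map (\<lambda>p. preorder_out (snd p)) cs))"
    using lukasiewicz_word_concat[of "map (\<lambda>p. preorder_out (snd p)) cs"] 1 by fastforce
  ultimately show ?case
    by (metis lukasiewicz_word_Cons preorder_out.simps set_map)
qed

lemma preorder_out_subset: "wf_trie \<sigma> t \<Longrightarrow> S \<in> set (preorder_out t) \<Longrightarrow> S \<subseteq> {1..\<sigma>}"
  by (induction t rule: preorder_out.induct) auto

lemma count_list_edge_labels: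
  "wf_trie \<sigma> t \<Longrightarrow> count_list (edge_labels t) c = length (filter ((\<in>) c) (preorder_out t))"
proof (induction t rule: preorder_out.induct)
  case (1 cs)
  have "count_list (map fst cs) c = (if c \<in> set (map fst cs) then 1 else 0)"
    using wf_trie_Node_distinct[OF "1.prems"] by (induction cs) auto
  moreover have "count_list (concat (map (\<lambda>p. fst p # edge_labels (snd p)) ds)) c
      = count_list (map fst ds) c + length (filter ((\<in>) c) (concat (map (\<lambda>p. preorder_out (snd p)) ds)))"
    if "set ds \<subseteq> set cs" for ds
    using that 1 by (induction ds) auto
  ultimately show ?case by simp
qed

lemma exists_trie_with_preorder_out:
  assumes "lukasiewicz_word 1 xs" and "\<And>S. S \<in> set xs \<Longrightarrow> S \<subseteq> {1..\<sigma>}"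
  shows "\<exists>t. wf_trie \<sigma> t \<and> preorder_out t = xs"
  using assms
proof (induction "length xs" arbitrary: xs rule: less_induct)
  case less
  obtain S rest where xs: "xs = S # rest"
    using less.prems(1) by (cases xs) (auto simp: lukasiewicz_word_def)
  have S: "S \<subseteq> {1..\<sigma>}"
    using less.prems(2) xs by simp
  then have "finite S"
    using finite_subset by blast
  obtain xss where xss: "length xss = card S" "concat xss = rest"
    "\<And>ys. ys \<in> set xss \<Longrightarrow> lukasiewicz_word 1 ys"
    using less.prems(1) xs lukasiewicz_word_factor lukasiewicz_word_Cons by metis
  have "\<exists>t. wf_trie \<sigma> t \<and> preorder_out t = ys" if "ys \<in> set xss" for ys
  proof (rule less.hyps)
    have "length ys \<le> length rest"
      using that xss(2) by (auto simp: length_concat intro!: member_le_sum_list)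
    then show "length ys < length xs" using xs by simp
    show "S' \<subseteq> {1..\<sigma>}" if "S' \<in> set ys" for S'
    proof (rule less.prems(2))
      show "S' \<in> set xs" using xs xss(2) that \<open>ys \<in> set xss\<close> by auto
    qed
  qed (use that xss in blast)
  then obtain g where g: "\<And>ys. ys \<in> set xss \<Longrightarrow> wf_trie \<sigma> (g ys) \<and> preorder_out (g ys) = ys"
    by metis
  define cs where "cs = zip (sorted_list_of_set S) (map g xss)"
  have "map fst cs = sorted_list_of_set S"
    using xss(1) \<open>finite S\<close> by (simp add: cs_def)
  moreover have "map (\<lambda>p. preorder_out (snd p)) cs = xss"
  proof -
    have "map snd cs = map g xss"
      using xss(1) \<open>finite S\<close> by (simp add: cs_def)
    then have "map preorder_out (map snd cs) = map preorder_out (map g xss)"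
      by (rule arg_cong)
    then have "map (\<lambda>p. preorder_out (snd p)) cs = map (\<lambda>ys. preorder_out (g ys)) xss"
      by (simp add: comp_def)
    also have "\<dots> = xss"
      using g by (simp add: map_idI)
    finally show ?thesis .
  qed
  moreover have "\<forall>p \<in> set cs. wf_trie \<sigma> (snd p)"
    using g by (auto simp: cs_def dest!: set_zip_rightD)
  ultimately have "wf_trie \<sigma> (Node cs) \<and> preorder_out (Node cs) = xs"
    using S \<open>finite S\<close> xs xss(2) by auto
  then show ?case by blast
qed

definition columns :: "nat \<Rightarrow> nat \<Rightarrow> (nat \<Rightarrow> nat \<Rightarrow> bool) \<Rightarrow> nat set list" where
  "columns \<sigma> n M = map (\<lambda>j. {i \<in> {1..\<sigma>}. M i j}) [1..<Suc n]"

lemma length_columns [simp]: "length (columns \<sigma> n M) = n"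
  by (simp add: columns_def)

lemma nth_columns: "j < n \<Longrightarrow> columns \<sigma> n M ! j = {i \<in> {1..\<sigma>}. M i (Suc j)}"
  by (simp add: columns_def del: upt_Suc)

lemma seqL_eq_excess_columns: "i \<le> n \<Longrightarrow> seqL \<sigma> M i = excess (take i (columns \<sigma> n M))"
proof (induction i)
  case 0
  then show ?case by (simp add: seqL_def)
next
  case (Suc i)
  then have "take (Suc i) (columns \<sigma> n M) = take i (columns \<sigma> n M) @ [{k \<in> {1..\<sigma>}. M k (Suc i)}]"
    by (simp add: take_Suc_conv_app_nth nth_columns)
  with Suc show ?case by (simp add: seqL_def seqD_def)
qed

lemma lukasiewicz_path_iff_lukasiewicz_word:
  "lukasiewicz_path n (seqL \<sigma> M) \<longleftrightarrow> lukasiewicz_word 1 (columns \<sigma> n M)"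
proof -
  have L: "seqL \<sigma> M i = excess (take i (columns \<sigma> n M))" if "i \<le> n" for i
    using seqL_eq_excess_columns[OF that] .
  have prefixes: "(\<forall>i \<in> {1..n-1}. seqL \<sigma> M i \<ge> 0) \<longleftrightarrow>
      (\<forall>i < n. excess (take i (columns \<sigma> n M)) > -1)"
  proof
    assume nonneg: "\<forall>i \<in> {1..n-1}. seqL \<sigma> M i \<ge> 0"
    show "\<forall>i < n. excess (take i (columns \<sigma> n M)) > -1"
    proof (intro allI impI)
      fix i assume "i < n"
      show "excess (take i (columns \<sigma> n M)) > -1"
      proof (cases "i = 0")
        case False
        then have "seqL \<sigma> M i \<ge> 0"
          using nonneg \<open>i < n\<close> by simp
        then show ?thesis
          using L[of i] \<open>i < n\<close> by simp
      qed simp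
    qed
  next
    assume pos: "\<forall>i < n. excess (take i (columns \<sigma> n M)) > -1"
    show "\<forall>i \<in> {1..n-1}. seqL \<sigma> M i \<ge> 0"
    proof
      fix i assume "i \<in> {1..n-1}"
      then have "i < n" by auto
      then show "seqL \<sigma> M i \<ge> 0"
        using pos L[of i] by fastforce
    qed
  qed
  have "seqL \<sigma> M (i + 1) - seqL \<sigma> M i \<ge> -1" for i
    by (simp add: seqL_def seqD_def)
  then show ?thesis
    using L[of n] prefixes by (auto simp: lukasiewicz_path_def lukasiewicz_word_def)
qed

lemma columns_f_map: "wf_trie \<sigma> T \<Longrightarrow> columns \<sigma> (num_nodes T) (f_map \<sigma> T) = preorder_out T"
proof (rule nth_equalityI)
  assume T: "wf_trie \<sigma> T"
  show "length (columns \<sigma> (num_nodes T) (f_map \<sigma> T)) = length (preorder_out T)"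
    by (simp add: num_nodes_def)
  fix k assume "k < length (columns \<sigma> (num_nodes T) (f_map \<sigma> T))"
  then have k: "k < length (preorder_out T)"
    by (simp add: num_nodes_def)
  then have "preorder_out T ! k \<subseteq> {1..\<sigma>}"
    using preorder_out_subset[OF T] nth_mem by blast
  then show "columns \<sigma> (num_nodes T) (f_map \<sigma> T) ! k = preorder_out T ! k"
    using k by (auto simp: nth_columns f_map_def num_nodes_def)
qed

lemma columns_inject:
  assumes "\<And>i j. M i j \<Longrightarrow> i \<in> {1..\<sigma>} \<and> j \<in> {1..n}"
    and "\<And>i j. M' i j \<Longrightarrow> i \<in> {1..\<sigma>} \<and> j \<in> {1..n}"
    and "columns \<sigma> n M = columns \<sigma> n M'"
  shows "M = M'"
proof (intro ext)
  fix i j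
  show "M i j = M' i j"
  proof (cases "i \<in> {1..\<sigma>} \<and> j \<in> {1..n}")
    case True
    then have "columns \<sigma> n M ! (j - 1) = columns \<sigma> n M' ! (j - 1)"
      using assms(3) by simp
    then show ?thesis
      using True by (auto simp: nth_columns)
  next
    case False
    then show ?thesis using assms(1,2) by blast
  qed
qed

lemma length_filter_columns:
  assumes "c \<in> {1..\<sigma>}"
  shows "length (filter ((\<in>) c) (columns \<sigma> n M)) = card {j \<in> {1..n}. M c j}"
proof -
  have "length (filter ((\<in>) c) (columns \<sigma> n M)) = length (filter (M c) [1..<Suc n])"
    using assms by (simp add: columns_def filter_map comp_def del: upt_Suc)
  also have "\<dots> = card (set (filter (M c) [1..<Suc n]))"
    by (rule distinct_card[symmetric]) simp
  also have "set (filter (M c) [1..<Suc n]) = {j \<in> {1..n}. M c j}"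
    by auto
  finally show ?thesis .
qed

lemma f_map_eq_iff_preorder_out_eq_columns:
  assumes "wf_trie \<sigma> t" and "num_nodes t = n"
    and "\<And>i j. M i j \<Longrightarrow> i \<in> {1..\<sigma>} \<and> j \<in> {1..n}"
  shows "f_map \<sigma> t = M \<longleftrightarrow> preorder_out t = columns \<sigma> n M"
proof
  assume "f_map \<sigma> t = M"
  then show "preorder_out t = columns \<sigma> n M"
    using columns_f_map[OF assms(1)] assms(2) by simp
next
  assume "preorder_out t = columns \<sigma> n M"
  then show "f_map \<sigma> t = M"
  proof (intro columns_inject)
    show "f_map \<sigma> t i j \<Longrightarrow> i \<in> {1..\<sigma>} \<and> j \<in> {1..n}" for i j
      using assms(2) by (simp add: f_map_def)
    show "columns \<sigma> n (f_map \<sigma> t) = columns \<sigma> n M"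
      using columns_f_map[OF assms(1)] assms(2) \<open>preorder_out t = columns \<sigma> n M\<close> by simp
  qed (rule assms(3))
qed

theorem lemma2:
  fixes \<sigma> n :: nat and ns :: "nat \<Rightarrow> nat" and M :: "nat \<Rightarrow> nat \<Rightarrow> bool"
  assumes "n \<ge> 1"
    and "(\<Sum>c = 1..\<sigma>. ns c) = n - 1"
    and "M \<in> mats_M \<sigma> n ns"
  shows "M \<in> f_map \<sigma> ` tries_U \<sigma> n ns \<longleftrightarrow> lukasiewicz_path n (seqL \<sigma> M)"
proof -
  have M_support: "M i j \<Longrightarrow> i \<in> {1..\<sigma>} \<and> j \<in> {1..n}" for i j
    using assms(3) by (simp add: mats_M_def)
  show ?thesis
  proof
    assume "M \<in> f_map \<sigma> ` tries_U \<sigma> n ns"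
    then obtain T where T: "wf_trie \<sigma> T" "num_nodes T = n" and "f_map \<sigma> T = M"
      by (auto simp: tries_U_def)
    then have "preorder_out T = columns \<sigma> n M"
      using f_map_eq_iff_preorder_out_eq_columns M_support by blast
    then show "lukasiewicz_path n (seqL \<sigma> M)"
      unfolding lukasiewicz_path_iff_lukasiewicz_word
      using preorder_out_lukasiewicz_word[OF T(1)] by simp
  next
    assume "lukasiewicz_path n (seqL \<sigma> M)"
    then have word: "lukasiewicz_word 1 (columns \<sigma> n M)"
      unfolding lukasiewicz_path_iff_lukasiewicz_word .
    have "S \<subseteq> {1..\<sigma>}" if "S \<in> set (columns \<sigma> n M)" for S
      using that by (auto simp: columns_def)
    then obtain t where t: "wf_trie \<sigma> t" "preorder_out t = columns \<sigma> n M"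
      using exists_trie_with_preorder_out[OF word] by blast
    then have nodes: "num_nodes t = n"
      by (simp add: num_nodes_def)
    have "t \<in> tries_U \<sigma> n ns"
      using t nodes assms(3)
      by (simp add: tries_U_def mats_M_def count_list_edge_labels length_filter_columns)
    moreover have "f_map \<sigma> t = M"
      using f_map_eq_iff_preorder_out_eq_columns[OF t(1) nodes M_support] t(2) by blast
    ultimately show "M \<in> f_map \<sigma> ` tries_U \<sigma> n ns"
      by blast
  qed
qed

end
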